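(* Let $X_t$ be the random walk on a finite T-graph all of whose segments have length at most $L$. For $r\ge L$ and $X_0\in B(0,r)$, let $\tau_r$ be the first time $X_t$ exits $B(0,r)$ or reaches a boundary vertex. Then for all integers $n\ge1$, $\mathbb P(\tau_r\ge 18nr^2)\le 2^{-n}$.
   Context: A finite T-graph is a finite collection of pairwise disjoint open segments $S_i$ and points $x_j$ in $\mathbb C$ such that $(\cup S_i)\cup(\cup x_j)$ is closed and connected and every $x_j$ lies on the boundary of the unbounded component of its complement; the $x_j$ are boundary vertices. Vertices are all endpoints of segments; every non-boundary (interior) vertex $x$ lies in exactly one open segment $S$. The random walk on the T-graph is the continuous-time pure jump Markov process in which boundary vertices are absorbing and from an interior vertex $x\in S$, with $x^+,x^-$ the neighbouring vertices of $x$ on $\overline S$ on either side, it jumps to $x^\pm$ at rate $\frac{1}{|x^\pm-x|\,|x^+-x^-|}$. (This walk is a martingale and $\frac{d}{dt}\mathrm{Tr}\,\mathrm{Var}(X_t)=1$ before absorption.) *)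

theory Defs
  imports "HOL-Analysis.Analysis"
begin

text \<open>A T-graph is given by a set Segs of open segments in the complex plane and a set Bd of
  points (the boundary vertices).\<close>

definition is_open_seg :: "complex set \<Rightarrow> bool" where
  "is_open_seg S \<longleftrightarrow> (\<exists>a b. a \<noteq> b \<and> S = open_segment a b)"

definition tgraph_set :: "complex set set \<Rightarrow> complex set \<Rightarrow> complex set" where
  "tgraph_set Segs Bd = (\<Union>Segs) \<union> Bd"

definition tvertices :: "complex set set \<Rightarrow> complex set \<Rightarrow> complex set" where
  "tvertices Segs Bd = (\<Union>S\<in>Segs. closure S - S) \<union> Bd"

text \<open>In the plane the complement of a bounded set has exactly one unbounded component,
  which is the library notion outside.\<close>
definition T_graph :: "complex set set \<Rightarrow> complex set \<Rightarrow> bool" where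
  "T_graph Segs Bd \<longleftrightarrow>
     finite Segs \<and> finite Bd \<and>
     (\<forall>S\<in>Segs. is_open_seg S) \<and>
     pairwise disjnt Segs \<and>
     closed (tgraph_set Segs Bd) \<and> connected (tgraph_set Segs Bd) \<and>
     (\<forall>x\<in>Bd. x \<in> frontier (outside (tgraph_set Segs Bd))) \<and>
     (\<forall>x\<in>tvertices Segs Bd - Bd. \<exists>!S. S \<in> Segs \<and> x \<in> S)"

definition seg_of :: "complex set set \<Rightarrow> complex \<Rightarrow> complex set" where
  "seg_of Segs x = (THE S. S \<in> Segs \<and> x \<in> S)"

text \<open>The neighbours x+ and x- of an interior vertex x: the vertices on the closure of its
  segment with no vertex strictly between them and x.\<close>
definition nbrs :: "complex set set \<Rightarrow> complex set \<Rightarrow> complex \<Rightarrow> complex set" where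
  "nbrs Segs Bd x = {y \<in> tvertices Segs Bd \<inter> closure (seg_of Segs x).
       y \<noteq> x \<and> open_segment x y \<inter> tvertices Segs Bd = {}}"

text \<open>Jump rate from x to y: 1 / (|y - x| |x+ - x-|); boundary vertices are absorbing.\<close>
definition jump_rate :: "complex set set \<Rightarrow> complex set \<Rightarrow> complex \<Rightarrow> complex \<Rightarrow> real" where
  "jump_rate Segs Bd x y =
     (if x \<in> tvertices Segs Bd - Bd \<and> y \<in> nbrs Segs Bd x
      then 1 / (cmod (y - x) * diameter (nbrs Segs Bd x)) else 0)"

definition generator :: "complex set set \<Rightarrow> complex set \<Rightarrow> complex \<Rightarrow> complex \<Rightarrow> real" where
  "generator Segs Bd x y =
     (if x = y then - (\<Sum>z\<in>nbrs Segs Bd x. jump_rate Segs Bd x z) else jump_rate Segs Bd x y)"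

fun kpow :: "complex set \<Rightarrow> (complex \<Rightarrow> complex \<Rightarrow> real) \<Rightarrow> nat \<Rightarrow> complex \<Rightarrow> complex \<Rightarrow> real" where
  "kpow A Q 0 x y = (if x = y \<and> x \<in> A then 1 else 0)"
| "kpow A Q (Suc k) x y = (if x \<in> A then (\<Sum>z\<in>A. Q x z * kpow A Q k z y) else 0)"

text \<open>States where the walk has not yet been stopped: interior vertices in the open ball B(0,r).\<close>
definition alive_set :: "complex set set \<Rightarrow> complex set \<Rightarrow> real \<Rightarrow> complex set" where
  "alive_set Segs Bd r = (tvertices Segs Bd - Bd) \<inter> ball 0 r"

text \<open>P_x(tau_r >= t): by the Kolmogorov equations for the finite-state pure jump process,
  this is the row sum of exp(t Q_A) with Q_A the generator killed outside A.\<close>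
definition exit_tail :: "complex set set \<Rightarrow> complex set \<Rightarrow> real \<Rightarrow> real \<Rightarrow> complex \<Rightarrow> real" where
  "exit_tail Segs Bd r t x =
     (\<Sum>y\<in>alive_set Segs Bd r.
        (\<Sum>k. t ^ k / fact k * kpow (alive_set Segs Bd r) (generator Segs Bd) k x y))"

end

theory Submission
  imports Defs
begin

(* P_x(tau_r >= t) is the row sum of exp(t Q_A), where Q_A is the generator killed outside the
   set A of interior vertices in B(0, r).  At an interior vertex the walk is a martingale whose
   squared norm grows at rate 1, and neighbours lie within L <= r of their vertex, so
   g(z) = 4 r^2 - |z|^2 is nonnegative on A and its neighbours and satisfies Q_A g <= -1 on A.
   Dynkin's argument then gives T P(tau_r >= T) <= g <= 4 r^2, i.e. P(tau_r >= 18 r^2) <= 1/2,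
   and the semigroup property exp((s + t) Q_A) = exp(s Q_A) exp(t Q_A) iterates this to 2^-n. *)

section \<open>Exponential of a killed generator\<close>

lemma kpow_notin_left: "x \<notin> A \<Longrightarrow> kpow A Q k x y = 0"
  by (cases k) auto

lemma kpow_add:
  assumes "finite A"
  shows "kpow A Q (i + j) x y = (\<Sum>z\<in>A. kpow A Q i x z * kpow A Q j z y)"
proof (induction i arbitrary: x)
  case 0
  have "(\<Sum>z\<in>A. kpow A Q 0 x z * kpow A Q j z y) = (\<Sum>z\<in>A. if z = x then kpow A Q j x y else 0)"
    by (rule sum.cong) (auto simp: kpow_notin_left)
  then show ?case
    using assms by (cases "x \<in> A") (auto simp: kpow_notin_left)
next
  case (Suc i)
  show ?case
  proof (cases "x \<in> A")
    case True
    have "kpow A Q (Suc i + j) x y = (\<Sum>w\<in>A. \<Sum>z\<in>A. Q x w * kpow A Q i w z * kpow A Q j z y)"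
      using True by (simp add: Suc.IH sum_distrib_left mult.assoc)
    also have "\<dots> = (\<Sum>z\<in>A. \<Sum>w\<in>A. Q x w * kpow A Q i w z * kpow A Q j z y)"
      by (rule sum.swap)
    finally show ?thesis
      using True by (simp add: sum_distrib_right)
  qed (simp add: kpow_notin_left)
qed

lemma kpow_Suc_right:
  assumes "finite A" "y \<in> A"
  shows "kpow A Q (Suc k) x y = (\<Sum>z\<in>A. kpow A Q k x z * Q z y)"
proof -
  have "kpow A Q (Suc 0) z y = Q z y" if "z \<in> A" for z
    using assms that by (simp add: if_distrib cong: if_cong)
  then show ?thesis
    using kpow_add[OF assms(1), of Q k 1 x y] by simp
qed

lemma kpow_exponential_bound:
  assumes "finite A"
  obtains M where "\<And>k x y. \<bar>kpow A Q k x y\<bar> \<le> M ^ k"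
proof -
  define m where "m = (\<Sum>x\<in>A. \<Sum>y\<in>A. \<bar>Q x y\<bar>)"
  have Qm: "\<bar>Q x y\<bar> \<le> m" if "x \<in> A" "y \<in> A" for x y
  proof -
    have "\<bar>Q x y\<bar> \<le> (\<Sum>y\<in>A. \<bar>Q x y\<bar>)"
      using that assms by (intro member_le_sum) auto
    also have "\<dots> \<le> m"
      unfolding m_def using that assms by (intro member_le_sum sum_nonneg) auto
    finally show ?thesis .
  qed
  have "0 \<le> m"
    unfolding m_def by (intro sum_nonneg) auto
  have "\<bar>kpow A Q k x y\<bar> \<le> (real (card A) * m) ^ k" for k x y
  proof (induction k arbitrary: x)
    case (Suc k)
    show ?case
    proof (cases "x \<in> A")
      case True
      have "\<bar>kpow A Q (Suc k) x y\<bar> \<le> (\<Sum>z\<in>A. \<bar>Q x z\<bar> * \<bar>kpow A Q k z y\<bar>)"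
        using True sum_abs[of "\<lambda>z. Q x z * kpow A Q k z y" A] by (simp add: abs_mult)
      also have "\<dots> \<le> (\<Sum>z\<in>A. m * (real (card A) * m) ^ k)"
        using True Qm \<open>0 \<le> m\<close> by (intro sum_mono mult_mono Suc.IH) auto
      finally show ?thesis by simp
    qed (simp add: \<open>0 \<le> m\<close>)
  qed simp
  then show thesis by (rule that)
qed

lemma summable_exp_series_bound:
  fixes a :: "nat \<Rightarrow> real"
  assumes "\<And>k. \<bar>a k\<bar> \<le> C * B ^ k"
  shows "summable (\<lambda>k. \<bar>t ^ k / fact k * a k\<bar>)"
proof (rule summable_comparison_test)
  show "\<exists>N. \<forall>k\<ge>N. norm \<bar>t ^ k / fact k * a k\<bar> \<le> C * (inverse (fact k) * (\<bar>t\<bar> * B) ^ k)"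
  proof (intro exI allI impI)
    fix k :: nat
    have "norm \<bar>t ^ k / fact k * a k\<bar> \<le> \<bar>t\<bar> ^ k / fact k * (C * B ^ k)"
      by (simp add: abs_mult power_abs) (intro divide_right_mono mult_left_mono assms; simp)
    then show "norm \<bar>t ^ k / fact k * a k\<bar> \<le> C * (inverse (fact k) * (\<bar>t\<bar> * B) ^ k)"
      by (simp add: power_mult_distrib field_simps)
  qed
  show "summable (\<lambda>k. C * (inverse (fact k) * (\<bar>t\<bar> * B) ^ k))"
    by (intro summable_mult summable_exp)
qed

lemma exp_series_Cauchy_product:
  fixes \<alpha> \<beta> :: "nat \<Rightarrow> real"
  assumes "summable (\<lambda>k. \<bar>s ^ k / fact k * \<alpha> k\<bar>)" "summable (\<lambda>k. \<bar>t ^ k / fact k * \<beta> k\<bar>)"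
  shows "(\<lambda>k. (\<Sum>i\<le>k. of_nat (k choose i) * s ^ i * t ^ (k - i) * \<alpha> i * \<beta> (k - i)) / fact k)
           sums ((\<Sum>k. s ^ k / fact k * \<alpha> k) * (\<Sum>k. t ^ k / fact k * \<beta> k))"
proof -
  have "(s ^ i / fact i * \<alpha> i) * (t ^ (k - i) / fact (k - i) * \<beta> (k - i))
          = of_nat (k choose i) * s ^ i * t ^ (k - i) * \<alpha> i * \<beta> (k - i) / fact k"
    if "i \<le> k" for i k
    using that by (simp add: binomial_fact)
  then have "(\<Sum>i\<le>k. (s ^ i / fact i * \<alpha> i) * (t ^ (k - i) / fact (k - i) * \<beta> (k - i)))
          = (\<Sum>i\<le>k. of_nat (k choose i) * s ^ i * t ^ (k - i) * \<alpha> i * \<beta> (k - i)) / fact k" for k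
    by (simp add: sum_divide_distrib)
  with Cauchy_product_sums[OF assms[unfolded real_norm_def[symmetric]]] show ?thesis
    by simp
qed

definition kexp :: "complex set \<Rightarrow> (complex \<Rightarrow> complex \<Rightarrow> real) \<Rightarrow> real \<Rightarrow> complex \<Rightarrow> complex \<Rightarrow> real" where
  "kexp A Q t x y = (\<Sum>k. t ^ k / fact k * kpow A Q k x y)"

lemma summable_kexp:
  assumes "finite A"
  shows "summable (\<lambda>k. \<bar>t ^ k / fact k * kpow A Q k x y\<bar>)"
proof -
  obtain M where "\<And>k x y. \<bar>kpow A Q k x y\<bar> \<le> M ^ k"
    using kpow_exponential_bound[OF assms] by blast
  then show ?thesis
    by (intro summable_exp_series_bound[where C = 1]) simp
qed

lemma kexp_sums: "finite A \<Longrightarrow> (\<lambda>k. t ^ k / fact k * kpow A Q k x y) sums kexp A Q t x y"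
  unfolding kexp_def by (rule summable_sums[OF summable_rabs_cancel[OF summable_kexp]])

lemma kexp_zero: "kexp A Q 0 x y = (if x = y \<and> x \<in> A then 1 else 0)"
proof -
  have "kexp A Q 0 x y = (\<Sum>k. kpow A Q k x y / fact k * 0 ^ k)"
    unfolding kexp_def by (intro suminf_cong) simp
  then show ?thesis
    by (simp only: powser_zero) simp
qed

lemma kexp_add:
  assumes A: "finite A"
  shows "kexp A Q (s + t) x w = (\<Sum>y\<in>A. kexp A Q s x y * kexp A Q t y w)"
proof -
  define c where "c y k = (\<Sum>i\<le>k. of_nat (k choose i) * s ^ i * t ^ (k - i)
                                    * kpow A Q i x y * kpow A Q (k - i) y w) / fact k" for y k
  have c: "c y sums (kexp A Q s x y * kexp A Q t y w)" for y
    unfolding c_def kexp_def by (intro exp_series_Cauchy_product summable_kexp A)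
  have "(\<Sum>y\<in>A. c y k) = (s + t) ^ k / fact k * kpow A Q k x w" for k
  proof -
    define b where "b i = of_nat (k choose i) * s ^ i * t ^ (k - i)" for i
    have "(\<Sum>y\<in>A. c y k) = (\<Sum>y\<in>A. \<Sum>i\<le>k. b i * (kpow A Q i x y * kpow A Q (k - i) y w)) / fact k"
      unfolding c_def b_def by (simp add: sum_divide_distrib mult.assoc)
    also have "\<dots> = (\<Sum>i\<le>k. \<Sum>y\<in>A. b i * (kpow A Q i x y * kpow A Q (k - i) y w)) / fact k"
      by (subst sum.swap) (rule refl)
    also have "\<dots> = (\<Sum>i\<le>k. b i * kpow A Q k x w) / fact k"
      by (simp add: sum_distrib_left[symmetric] kpow_add[OF A, symmetric])
    also have "\<dots> = (s + t) ^ k / fact k * kpow A Q k x w"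
      by (simp add: b_def binomial_ring sum_distrib_right)
    finally show ?thesis .
  qed
  moreover have "(\<lambda>k. \<Sum>y\<in>A. c y k) sums (\<Sum>y\<in>A. kexp A Q s x y * kexp A Q t y w)"
    by (intro sums_sum c)
  ultimately have "(\<lambda>k. (s + t) ^ k / fact k * kpow A Q k x w) sums (\<Sum>y\<in>A. kexp A Q s x y * kexp A Q t y w)"
    by simp
  with kexp_sums[OF A] show ?thesis
    by (rule sums_unique2)
qed

lemma binomial_sum_Suc:
  fixes f :: "nat \<Rightarrow> real"
  shows "(\<Sum>j\<le>Suc k. of_nat (Suc k choose j) * c ^ (Suc k - j) * f j)
       = (\<Sum>j\<le>k. of_nat (k choose j) * c ^ (k - j) * f (Suc j))
         + c * (\<Sum>j\<le>k. of_nat (k choose j) * c ^ (k - j) * f j)"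
proof -
  have "c * (\<Sum>j\<le>k. of_nat (k choose j) * c ^ (k - j) * f j)
      = (\<Sum>j\<le>Suc k. of_nat (k choose j) * c ^ (Suc k - j) * f j)"
    by (simp add: sum_distrib_left mult_ac Suc_diff_le)
  also have "\<dots> = c ^ Suc k * f 0 + (\<Sum>j\<le>k. of_nat (k choose Suc j) * c ^ (k - j) * f (Suc j))"
    by (subst sum.atMost_Suc_shift) simp
  finally show ?thesis
    by (subst sum.atMost_Suc_shift) (simp add: distrib_right sum.distrib)
qed

lemma kpow_shift_diag:
  assumes A: "finite A"
  shows "kpow A (\<lambda>x y. Q x y + (if x = y then c else 0)) k x y
           = (\<Sum>j\<le>k. of_nat (k choose j) * c ^ (k - j) * kpow A Q j x y)"
proof (induction k arbitrary: x)
  case (Suc k)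
  let ?B = "\<lambda>x y. Q x y + (if x = y then c else 0)"
  show ?case
  proof (cases "x \<in> A")
    case True
    have "kpow A ?B (Suc k) x y
        = (\<Sum>z\<in>A. Q x z * kpow A ?B k z y + (if z = x then c * kpow A ?B k x y else 0))"
      using True by (auto simp: distrib_right intro!: sum.cong)
    also have "\<dots> = (\<Sum>z\<in>A. Q x z * kpow A ?B k z y) + c * kpow A ?B k x y"
      using True A by (simp add: sum.distrib)
    also have "(\<Sum>z\<in>A. Q x z * kpow A ?B k z y)
             = (\<Sum>j\<le>k. of_nat (k choose j) * c ^ (k - j) * kpow A Q (Suc j) x y)"
      using True by (simp add: Suc.IH sum_distrib_left sum_distrib_right mult_ac) (rule sum.swap)
    also have "c * kpow A ?B k x y = c * (\<Sum>j\<le>k. of_nat (k choose j) * c ^ (k - j) * kpow A Q j x y)"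
      by (simp only: Suc.IH)
    finally show ?thesis
      by (simp only: binomial_sum_Suc)
  qed (simp add: kpow_notin_left)
qed simp

lemma kexp_shift_diag:
  assumes A: "finite A"
  shows "kexp A (\<lambda>x y. Q x y + (if x = y then c else 0)) t x y = exp (c * t) * kexp A Q t x y"
proof -
  let ?B = "\<lambda>x y. Q x y + (if x = y then c else 0)"
  have "\<bar>c ^ k\<bar> \<le> 1 * \<bar>c\<bar> ^ k" for k
    by (simp add: power_abs)
  then have "summable (\<lambda>k. \<bar>t ^ k / fact k * c ^ k\<bar>)"
    by (rule summable_exp_series_bound)
  from exp_series_Cauchy_product[OF summable_kexp[OF A] this]
  have prod: "(\<lambda>k. (\<Sum>i\<le>k. of_nat (k choose i) * t ^ i * t ^ (k - i) * kpow A Q i x y * c ^ (k - i)) / fact k)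
          sums (kexp A Q t x y * (\<Sum>k. t ^ k / fact k * c ^ k))"
    unfolding kexp_def .
  have "(\<lambda>k. t ^ k / fact k * c ^ k) sums exp (c * t)"
    using exp_converges[of "c * t"] by (simp add: divide_inverse power_mult_distrib mult_ac)
  then have exp: "(\<Sum>k. t ^ k / fact k * c ^ k) = exp (c * t)"
    by (rule sums_unique[symmetric])
  have series_term: "(\<Sum>i\<le>k. of_nat (k choose i) * t ^ i * t ^ (k - i) * kpow A Q i x y * c ^ (k - i)) / fact k
      = t ^ k / fact k * kpow A ?B k x y" for k
  proof -
    have "of_nat (k choose i) * t ^ i * t ^ (k - i) * kpow A Q i x y * c ^ (k - i)
        = t ^ k * (of_nat (k choose i) * c ^ (k - i) * kpow A Q i x y)" if "i \<in> {..k}" for i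
    proof -
      have "t ^ k = t ^ i * t ^ (k - i)"
        using that by (simp flip: power_add)
      then show ?thesis by (simp add: mult_ac)
    qed
    then have "(\<Sum>i\<le>k. of_nat (k choose i) * t ^ i * t ^ (k - i) * kpow A Q i x y * c ^ (k - i))
        = t ^ k * (\<Sum>i\<le>k. of_nat (k choose i) * c ^ (k - i) * kpow A Q i x y)"
      unfolding sum_distrib_left by (rule sum.cong[OF refl])
    then show ?thesis
      by (simp add: kpow_shift_diag[OF A])
  qed
  from prod have "(\<lambda>k. t ^ k / fact k * kpow A ?B k x y) sums (kexp A Q t x y * exp (c * t))"
    unfolding series_term exp .
  with kexp_sums[OF A] have "kexp A ?B t x y = kexp A Q t x y * exp (c * t)"
    by (rule sums_unique2)
  then show ?thesis
    by (simp only: mult.commute)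
qed

lemma kexp_nonneg:
  assumes A: "finite A"
    and Q: "\<And>x y. x \<in> A \<Longrightarrow> y \<in> A \<Longrightarrow> x \<noteq> y \<Longrightarrow> 0 \<le> Q x y" and "0 \<le> t"
  shows "0 \<le> kexp A Q t x y"
proof -
  define c where "c = (\<Sum>x\<in>A. \<bar>Q x x\<bar>)"
  have "\<bar>Q x x\<bar> \<le> c" if "x \<in> A" for x
    unfolding c_def using that A by (intro member_le_sum) auto
  then have "0 \<le> Q x y + (if x = y then c else 0)" if "x \<in> A" "y \<in> A" for x y
    using Q[OF that] that by fastforce
  then have "0 \<le> kpow A (\<lambda>x y. Q x y + (if x = y then c else 0)) k x y" for k x y
    by (induction k arbitrary: x) (auto intro!: sum_nonneg mult_nonneg_nonneg)
  then have "0 \<le> kexp A (\<lambda>x y. Q x y + (if x = y then c else 0)) t x y"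
    unfolding kexp_def using \<open>0 \<le> t\<close>
    by (intro suminf_nonneg summable_rabs_cancel[OF summable_kexp[OF A]]) auto
  then show ?thesis
    by (simp add: kexp_shift_diag[OF A] zero_le_mult_iff)
qed

lemma kexp_has_real_derivative:
  assumes A: "finite A" and "y \<in> A"
  shows "((\<lambda>t. kexp A Q t x y) has_real_derivative (\<Sum>z\<in>A. kexp A Q t x z * Q z y)) (at t)"
proof -
  define a where "a k = kpow A Q k x y / fact k" for k
  have "summable (\<lambda>k. a k * s ^ k)" for s
    using summable_rabs_cancel[OF summable_kexp[OF A, of s Q x y]] by (simp add: a_def mult_ac)
  then have "((\<lambda>t. \<Sum>k. a k * t ^ k) has_real_derivative (\<Sum>k. diffs a k * t ^ k)) (at t)"
    by (rule termdiffs_strong_converges_everywhere)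
  moreover have "(\<lambda>t. \<Sum>k. a k * t ^ k) = (\<lambda>t. kexp A Q t x y)"
    by (simp add: kexp_def a_def mult_ac)
  moreover have "(\<Sum>k. diffs a k * t ^ k) = (\<Sum>z\<in>A. kexp A Q t x z * Q z y)"
  proof -
    have "diffs a k * t ^ k = (\<Sum>z\<in>A. t ^ k / fact k * kpow A Q k x z * Q z y)" for k
    proof -
      have "diffs a k * t ^ k = t ^ k / fact k * kpow A Q (Suc k) x y"
        unfolding diffs_def a_def by (simp add: fact_Suc del: of_nat_Suc kpow.simps)
      also have "\<dots> = (\<Sum>z\<in>A. t ^ k / fact k * kpow A Q k x z * Q z y)"
        using assms by (simp add: kpow_Suc_right sum_distrib_left mult_ac del: kpow.simps)
      finally show ?thesis .
    qed
    then have "(\<Sum>k. diffs a k * t ^ k) = (\<Sum>k. \<Sum>z\<in>A. t ^ k / fact k * kpow A Q k x z * Q z y)"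
      by presburger
    also have "\<dots> = (\<Sum>z\<in>A. \<Sum>k. t ^ k / fact k * kpow A Q k x z * Q z y)"
      by (intro suminf_sum summable_mult2 summable_rabs_cancel[OF summable_kexp[OF A]])
    also have "\<dots> = (\<Sum>z\<in>A. kexp A Q t x z * Q z y)"
      unfolding kexp_def
      by (intro sum.cong refl suminf_mult2[symmetric] summable_rabs_cancel[OF summable_kexp[OF A]])
    finally show ?thesis .
  qed
  ultimately show ?thesis by simp
qed

section \<open>Survival bounds from a Lyapunov function\<close>

definition gen_apply :: "complex set \<Rightarrow> (complex \<Rightarrow> complex \<Rightarrow> real) \<Rightarrow> (complex \<Rightarrow> real) \<Rightarrow> complex \<Rightarrow> real" where
  "gen_apply A Q v x = (\<Sum>y\<in>A. Q x y * v y)"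

definition kexp_apply :: "complex set \<Rightarrow> (complex \<Rightarrow> complex \<Rightarrow> real) \<Rightarrow> real \<Rightarrow> (complex \<Rightarrow> real) \<Rightarrow> complex \<Rightarrow> real" where
  "kexp_apply A Q t v x = (\<Sum>y\<in>A. kexp A Q t x y * v y)"

definition sub_Q_matrix :: "complex set \<Rightarrow> (complex \<Rightarrow> complex \<Rightarrow> real) \<Rightarrow> bool" where
  "sub_Q_matrix A Q \<longleftrightarrow> (\<forall>x\<in>A. \<forall>y\<in>A. x \<noteq> y \<longrightarrow> 0 \<le> Q x y) \<and> (\<forall>x\<in>A. gen_apply A Q (\<lambda>_. 1) x \<le> 0)"

lemma kexp_apply_zero:
  assumes "finite A"
  shows "kexp_apply A Q 0 v x = (if x \<in> A then v x else 0)"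
proof -
  have "kexp A Q 0 x y * v y = (if x = y then (if x \<in> A then v x else 0) else 0)" for y
    by (simp add: kexp_zero)
  then show ?thesis
    using assms by (simp add: kexp_apply_def)
qed

lemma kexp_apply_add:
  assumes "finite A"
  shows "kexp_apply A Q (s + t) v x = (\<Sum>y\<in>A. kexp A Q s x y * kexp_apply A Q t v y)"
proof -
  have "kexp_apply A Q (s + t) v x = (\<Sum>w\<in>A. \<Sum>y\<in>A. kexp A Q s x y * kexp A Q t y w * v w)"
    unfolding kexp_apply_def kexp_add[OF assms] by (simp add: sum_distrib_right)
  also have "\<dots> = (\<Sum>y\<in>A. \<Sum>w\<in>A. kexp A Q s x y * kexp A Q t y w * v w)"
    by (rule sum.swap)
  finally show ?thesis
    unfolding kexp_apply_def by (simp add: sum_distrib_left mult_ac)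
qed

lemma kexp_apply_has_real_derivative:
  assumes "finite A"
  shows "((\<lambda>t. kexp_apply A Q t v x) has_real_derivative kexp_apply A Q t (gen_apply A Q v) x) (at t)"
proof -
  have "((\<lambda>t. kexp_apply A Q t v x) has_real_derivative
          (\<Sum>y\<in>A. (\<Sum>z\<in>A. kexp A Q t x z * Q z y) * v y)) (at t)"
    unfolding kexp_apply_def
    by (intro DERIV_sum DERIV_cmult_right kexp_has_real_derivative assms)
  also have "(\<Sum>y\<in>A. (\<Sum>z\<in>A. kexp A Q t x z * Q z y) * v y) = kexp_apply A Q t (gen_apply A Q v) x"
    unfolding kexp_apply_def gen_apply_def sum_distrib_right sum_distrib_left
    by (subst sum.swap) (simp add: mult_ac)
  finally show ?thesis .
qed

lemma kexp_apply_nonneg: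
  assumes "finite A" "sub_Q_matrix A Q" "0 \<le> t" "\<And>y. y \<in> A \<Longrightarrow> 0 \<le> v y"
  shows "0 \<le> kexp_apply A Q t v x"
  using assms unfolding kexp_apply_def sub_Q_matrix_def
  by (auto intro!: sum_nonneg mult_nonneg_nonneg kexp_nonneg)

lemma lyapunov_survival_bound:
  assumes A: "finite A" and Q: "sub_Q_matrix A Q"
    and g_nonneg: "\<And>y. y \<in> A \<Longrightarrow> 0 \<le> g y"
    and g_drift: "\<And>y. y \<in> A \<Longrightarrow> gen_apply A Q g y \<le> -1"
    and "0 \<le> T" "x \<in> A"
  shows "T * kexp_apply A Q T (\<lambda>_. 1) x \<le> g x"
proof -
  define F where "F t = kexp_apply A Q t g x + t * kexp_apply A Q t (\<lambda>_. 1) x" for t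
  have "F T \<le> F 0"
  proof (rule DERIV_nonpos_imp_nonincreasing[OF \<open>0 \<le> T\<close>])
    fix t assume "0 \<le> t" "t \<le> T"
    have "(F has_real_derivative kexp_apply A Q t (gen_apply A Q g) x
            + (kexp_apply A Q t (\<lambda>_. 1) x + t * kexp_apply A Q t (gen_apply A Q (\<lambda>_. 1)) x)) (at t)"
      unfolding F_def
      by (rule derivative_eq_intros kexp_apply_has_real_derivative[OF A] refl | simp)+
    moreover have "kexp_apply A Q t (gen_apply A Q g) x
            + (kexp_apply A Q t (\<lambda>_. 1) x + t * kexp_apply A Q t (gen_apply A Q (\<lambda>_. 1)) x)
          = kexp_apply A Q t (\<lambda>y. gen_apply A Q g y + 1 + t * gen_apply A Q (\<lambda>_. 1) y) x"
      unfolding kexp_apply_def by (simp add: sum.distrib sum_distrib_left distrib_left mult_ac)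
    moreover have "\<dots> \<le> 0"
    proof -
      have "gen_apply A Q g y + 1 + t * gen_apply A Q (\<lambda>_. 1) y \<le> 0" if "y \<in> A" for y
        using g_drift[OF that] Q that \<open>0 \<le> t\<close> mult_nonneg_nonpos[of t "gen_apply A Q (\<lambda>_. 1) y"]
        unfolding sub_Q_matrix_def by auto
      then show ?thesis
        unfolding kexp_apply_def using A Q \<open>0 \<le> t\<close>
        by (auto simp: sub_Q_matrix_def intro!: sum_nonpos mult_nonneg_nonpos kexp_nonneg)
    qed
    ultimately show "\<exists>y. (F has_real_derivative y) (at t) \<and> y \<le> 0"
      by auto
  qed
  moreover have "F 0 = g x"
    using A \<open>x \<in> A\<close> by (simp add: F_def kexp_apply_zero)
  moreover have "0 \<le> kexp_apply A Q T g x"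
    by (rule kexp_apply_nonneg[OF A Q \<open>0 \<le> T\<close> g_nonneg])
  ultimately show ?thesis
    unfolding F_def by linarith
qed

lemma survival_geometric_decay:
  assumes A: "finite A" and Q: "sub_Q_matrix A Q"
    and g_nonneg: "\<And>y. y \<in> A \<Longrightarrow> 0 \<le> g y"
    and g_le: "\<And>y. y \<in> A \<Longrightarrow> g y \<le> G"
    and g_drift: "\<And>y. y \<in> A \<Longrightarrow> gen_apply A Q g y \<le> -1"
    and "0 < T" "2 * G \<le> T"
  shows "kexp_apply A Q (real n * T) (\<lambda>_. 1) x \<le> 1 / 2 ^ n"
proof (induction n arbitrary: x)
  case 0
  show ?case
    using A by (simp add: kexp_apply_zero)
next
  case (Suc n)
  have half: "kexp_apply A Q T (\<lambda>_. 1) y \<le> 1 / 2" if "y \<in> A" for y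
  proof -
    have "T * kexp_apply A Q T (\<lambda>_. 1) y \<le> g y"
      using lyapunov_survival_bound[OF A Q g_nonneg g_drift] \<open>0 < T\<close> that by simp
    then have "T * kexp_apply A Q T (\<lambda>_. 1) y \<le> T * (1 / 2)"
      using g_le[OF that] \<open>2 * G \<le> T\<close> by simp
    then show ?thesis
      using \<open>0 < T\<close> by (rule mult_left_le_imp_le)
  qed
  have "kexp_apply A Q (real (Suc n) * T) (\<lambda>_. 1) x
      = (\<Sum>y\<in>A. kexp A Q (real n * T) x y * kexp_apply A Q T (\<lambda>_. 1) y)"
    unfolding kexp_apply_add[OF A, symmetric] by (simp add: algebra_simps)
  also have "\<dots> \<le> (\<Sum>y\<in>A. kexp A Q (real n * T) x y * (1 / 2))"
    using Q \<open>0 < T\<close> unfolding sub_Q_matrix_def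
    by (intro sum_mono mult_left_mono half kexp_nonneg[OF A]) auto
  also have "\<dots> = kexp_apply A Q (real n * T) (\<lambda>_. 1) x / 2"
    by (simp add: kexp_apply_def sum_divide_distrib)
  also have "\<dots> \<le> 1 / 2 ^ Suc n"
    using Suc.IH[of x] by simp
  finally show ?case .
qed

section \<open>Neighbours in a T-graph\<close>

lemma T_graphD:
  assumes "T_graph Segs Bd"
  shows "finite Segs" "finite Bd" "\<And>S. S \<in> Segs \<Longrightarrow> is_open_seg S"
    "\<And>x. x \<in> tvertices Segs Bd - Bd \<Longrightarrow> \<exists>!S. S \<in> Segs \<and> x \<in> S"
  using assms by (simp_all add: T_graph_def)

lemma finite_tvertices:
  assumes "T_graph Segs Bd"
  shows "finite (tvertices Segs Bd)"
proof -
  have "finite (closure S - S)" if S: "S \<in> Segs" for S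
  proof -
    obtain a b where "a \<noteq> b" "S = open_segment a b"
      using T_graphD(3)[OF assms S] unfolding is_open_seg_def by blast
    then have "closure S - S = closed_segment a b - open_segment a b"
      by simp
    also have "\<dots> \<subseteq> {a, b}"
      by (auto simp: open_segment_def)
    finally show ?thesis
      by (rule finite_subset) simp
  qed
  then show ?thesis
    using T_graphD(1,2)[OF assms] by (simp add: tvertices_def)
qed

lemma seg_of_interior_vertex:
  assumes "T_graph Segs Bd" "x \<in> tvertices Segs Bd - Bd"
  shows "seg_of Segs x \<in> Segs" "x \<in> seg_of Segs x"
proof -
  have "seg_of Segs x \<in> Segs \<and> x \<in> seg_of Segs x"
    unfolding seg_of_def by (rule theI'[OF T_graphD(4)[OF assms]])
  then show "seg_of Segs x \<in> Segs" "x \<in> seg_of Segs x"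
    by simp_all
qed

lemma nearest_neighbours_real:
  fixes W :: "real set"
  assumes "finite W" "a \<in> W" "b \<in> W" "a < s" "s < b"
  obtains m p where "{w \<in> W. w \<noteq> s \<and> open_segment s w \<inter> W = {}} = {m, p}" "m < s" "s < p"
proof -
  define m where "m = Max {w \<in> W. w < s}"
  define p where "p = Min {w \<in> W. s < w}"
  have "finite {w \<in> W. w < s}" "{w \<in> W. w < s} \<noteq> {}" "finite {w \<in> W. s < w}" "{w \<in> W. s < w} \<noteq> {}"
    using assms by auto
  then have m: "m \<in> W" "m < s" "\<And>w. w \<in> W \<Longrightarrow> w < s \<Longrightarrow> w \<le> m"
    and p: "p \<in> W" "s < p" "\<And>w. w \<in> W \<Longrightarrow> s < w \<Longrightarrow> p \<le> w"
    using Max_in Min_in unfolding m_def p_def by fastforce+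
  have "w = m \<or> w = p" if "w \<in> W" "w \<noteq> s" "open_segment s w \<inter> W = {}" for w
  proof (cases "w < s")
    case True
    then have "\<not> w < m"
      using that m by (auto simp: open_segment_eq_real_ivl)
    then show ?thesis
      using True m(3) that(1) by force
  next
    case False
    then have "\<not> p < w"
      using that p by (auto simp: open_segment_eq_real_ivl)
    then show ?thesis
      using False p(3) that by force
  qed
  moreover have "open_segment s m \<inter> W = {}" "open_segment s p \<inter> W = {}"
    using m p by (force simp: open_segment_eq_real_ivl)+
  ultimately have "{w \<in> W. w \<noteq> s \<and> open_segment s w \<inter> W = {}} = {m, p}"
    using m(1,2) p(1,2) by auto
  then show thesis
    using m(2) p(2) by (rule that)
qed

lemma open_segment_affine_image:
  fixes a d :: "'a::real_vector"
  assumes "d \<noteq> 0"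
  shows "open_segment (a + s *\<^sub>R d) (a + w *\<^sub>R d) = (\<lambda>u. a + u *\<^sub>R d) ` open_segment s w"
proof -
  have "open_segment (s *\<^sub>R d) (w *\<^sub>R d) = (\<lambda>u. u *\<^sub>R d) ` open_segment s w"
    using assms by (intro open_segment_linear_image) (auto simp: linear_scaleR_left inj_on_def)
  then show ?thesis
    by (simp add: open_segment_translation image_image)
qed

lemma open_segment_nearest_points:
  fixes a b x :: "'a::real_vector"
  assumes "finite V" "a \<in> V" "b \<in> V" "x \<in> open_segment a b"
  obtains p q where "{y \<in> V \<inter> closed_segment a b. y \<noteq> x \<and> open_segment x y \<inter> V = {}} = {p, q}"
    "x \<in> open_segment p q"
proof -
  have "a \<noteq> b"
    using assms(4) by auto
  define \<gamma> where "\<gamma> w = a + w *\<^sub>R (b - a)" for w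
  have "inj \<gamma>"
    using \<open>a \<noteq> b\<close> by (auto simp: inj_on_def \<gamma>_def)
  have \<gamma>_open_segment: "open_segment (\<gamma> s) (\<gamma> w) = \<gamma> ` open_segment s w" for s w
    unfolding \<gamma>_def using \<open>a \<noteq> b\<close> by (simp add: open_segment_affine_image)
  have \<gamma>_convex: "(1 - u) *\<^sub>R a + u *\<^sub>R b = \<gamma> u" for u
    by (simp add: \<gamma>_def algebra_simps)
  have \<gamma>_segment: "closed_segment a b = \<gamma> ` {0..1}"
    by (auto simp: closed_segment_def \<gamma>_convex)
  obtain s where s: "0 < s" "s < 1" "x = \<gamma> s"
    using assms(4) by (auto simp: in_segment \<gamma>_convex)
  define W where "W = {w \<in> {0..1}. \<gamma> w \<in> V}"
  have "finite W"
    unfolding W_def using finite_vimageI[OF assms(1) \<open>inj \<gamma>\<close>] by (auto intro: finite_subset)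
  have "0 \<in> W" "1 \<in> W"
    using assms(2,3) by (auto simp: W_def \<gamma>_def)
  have segment_free: "open_segment x (\<gamma> w) \<inter> V = {} \<longleftrightarrow> open_segment s w \<inter> W = {}"
    if "w \<in> {0..1}" for w
  proof -
    have "open_segment s w \<subseteq> {0..1}"
      using that s by (auto simp: open_segment_eq_real_ivl split: if_splits)
    then show ?thesis
      unfolding s(3) \<gamma>_open_segment W_def by (auto simp: disjoint_iff)
  qed
  have "{y \<in> V \<inter> closed_segment a b. y \<noteq> x \<and> open_segment x y \<inter> V = {}}
      = \<gamma> ` {w \<in> {0..1}. \<gamma> w \<in> V \<and> \<gamma> w \<noteq> x \<and> open_segment x (\<gamma> w) \<inter> V = {}}"
    unfolding \<gamma>_segment by blast
  also have "{w \<in> {0..1}. \<gamma> w \<in> V \<and> \<gamma> w \<noteq> x \<and> open_segment x (\<gamma> w) \<inter> V = {}}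
      = {w \<in> W. w \<noteq> s \<and> open_segment s w \<inter> W = {}}"
    using segment_free unfolding s(3) W_def inj_eq[OF \<open>inj \<gamma>\<close>] by auto
  finally have nearest: "{y \<in> V \<inter> closed_segment a b. y \<noteq> x \<and> open_segment x y \<inter> V = {}}
      = \<gamma> ` {w \<in> W. w \<noteq> s \<and> open_segment s w \<inter> W = {}}" .
  obtain m p where "{w \<in> W. w \<noteq> s \<and> open_segment s w \<inter> W = {}} = {m, p}" "m < s" "s < p"
    using nearest_neighbours_real[OF \<open>finite W\<close> \<open>0 \<in> W\<close> \<open>1 \<in> W\<close> s(1,2)] .
  moreover have "x \<in> open_segment (\<gamma> m) (\<gamma> p)"
    using \<open>m < s\<close> \<open>s < p\<close> unfolding \<gamma>_open_segment s(3) by (simp add: open_segment_eq_real_ivl)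
  ultimately show thesis
    using nearest that by simp
qed

lemma nbrs_interior_vertex:
  assumes TG: "T_graph Segs Bd" and x: "x \<in> tvertices Segs Bd - Bd"
  obtains p q where "nbrs Segs Bd x = {p, q}" "x \<in> open_segment p q"
proof -
  let ?S = "seg_of Segs x" and ?V = "tvertices Segs Bd"
  obtain a b where ab: "a \<noteq> b" "?S = open_segment a b"
    using T_graphD(3)[OF TG seg_of_interior_vertex(1)[OF TG x]] unfolding is_open_seg_def by blast
  have "closure ?S - ?S \<subseteq> ?V"
    using seg_of_interior_vertex(1)[OF TG x] unfolding tvertices_def by blast
  then have "closed_segment a b - open_segment a b \<subseteq> ?V"
    using ab by simp
  then have "a \<in> ?V" "b \<in> ?V"
    by (auto simp: open_segment_def)
  have "x \<in> open_segment a b"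
    using seg_of_interior_vertex(2)[OF TG x] ab(2) by simp
  then obtain p q
    where pq: "{y \<in> ?V \<inter> closed_segment a b. y \<noteq> x \<and> open_segment x y \<inter> ?V = {}} = {p, q}"
      and "x \<in> open_segment p q"
    using open_segment_nearest_points[OF finite_tvertices[OF TG] \<open>a \<in> ?V\<close> \<open>b \<in> ?V\<close>] by blast
  have "nbrs Segs Bd x = {p, q}"
    unfolding nbrs_def ab(2) closure_open_segment pq[symmetric] using ab(1) by simp
  then show thesis
    using \<open>x \<in> open_segment p q\<close> by (rule that)
qed

lemma dist_nbrs_le:
  assumes TG: "T_graph Segs Bd" and x: "x \<in> tvertices Segs Bd - Bd"
    and diam: "\<forall>S\<in>Segs. diameter S \<le> L" and z: "z \<in> nbrs Segs Bd x"
  shows "dist z x \<le> L"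
proof -
  let ?S = "seg_of Segs x"
  obtain a b where "?S = open_segment a b"
    using T_graphD(3)[OF TG seg_of_interior_vertex(1)[OF TG x]] unfolding is_open_seg_def by blast
  then have "bounded ?S"
    by (simp add: bounded_open_segment)
  moreover have "z \<in> closure ?S" "x \<in> closure ?S"
    using z seg_of_interior_vertex(2)[OF TG x] closure_subset unfolding nbrs_def by auto
  ultimately have "dist z x \<le> diameter (closure ?S)"
    by (intro diameter_bounded_bound) (simp_all add: bounded_closure)
  also have "\<dots> \<le> L"
    using \<open>bounded ?S\<close> diam seg_of_interior_vertex(1)[OF TG x] by (simp add: diameter_closure)
  finally show ?thesis .
qed

lemma diameter_doubleton: "diameter {p, q} = dist p (q :: 'a::real_normed_vector)"
proof (rule order_antisym)
  show "diameter {p, q} \<le> dist p q"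
    by (rule diameter_le) (auto simp: dist_norm norm_minus_commute)
  show "dist p q \<le> diameter {p, q}"
    by (rule diameter_bounded_bound) auto
qed

lemma open_segment_quadratic_drift:
  fixes p q x :: "'a::real_inner"
  assumes "x \<in> open_segment p q"
  shows "(norm p ^ 2 - norm x ^ 2) / (dist p x * dist p q)
       + (norm q ^ 2 - norm x ^ 2) / (dist q x * dist p q) = 1"
proof -
  obtain u where u: "0 < u" "u < 1" "x = (1 - u) *\<^sub>R p + u *\<^sub>R q"
    using assms by (auto simp: in_segment)
  define e where "e = q - p"
  define D where "D = norm e"
  have "D > 0"
    using assms by (auto simp: D_def e_def)
  have p: "p = x + (- u) *\<^sub>R e" and q: "q = x + (1 - u) *\<^sub>R e"
    using u(3) by (simp_all add: e_def algebra_simps)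
  have sq: "norm (x + c *\<^sub>R e) ^ 2 - norm x ^ 2 = c * (c * D ^ 2 + 2 * inner x e)" for c
    using dot_norm[of x "c *\<^sub>R e"] by (simp add: D_def power_mult_distrib power2_eq_square algebra_simps)
  have "dist p x = u * D" "dist q x = (1 - u) * D"
    using u(1,2) by (subst p q, simp add: dist_norm D_def)+
  moreover have "dist p q = D"
    by (simp add: dist_norm D_def e_def norm_minus_commute)
  moreover have "norm p ^ 2 - norm x ^ 2 = u * (u * D ^ 2 - 2 * inner x e)"
    using sq[of "- u", folded p] by (simp add: algebra_simps)
  moreover have "norm q ^ 2 - norm x ^ 2 = (1 - u) * ((1 - u) * D ^ 2 + 2 * inner x e)"
    using sq[of "1 - u", folded q] .
  ultimately have "(norm p ^ 2 - norm x ^ 2) / (dist p x * dist p q)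
       + (norm q ^ 2 - norm x ^ 2) / (dist q x * dist p q)
      = (u * D ^ 2 - 2 * inner x e) / (D * D) + ((1 - u) * D ^ 2 + 2 * inner x e) / (D * D)"
    using u(1,2) by (simp add: mult.assoc)
  also have "\<dots> = 1"
    using \<open>D > 0\<close> by (simp add: add_divide_distrib[symmetric] algebra_simps power2_eq_square)
  finally show ?thesis .
qed

lemma jump_rate_nonneg:
  assumes "finite (tvertices Segs Bd)"
  shows "0 \<le> jump_rate Segs Bd x y"
proof -
  have "finite (nbrs Segs Bd x)"
    using assms by (rule rev_finite_subset) (auto simp: nbrs_def)
  then show ?thesis
    by (simp add: jump_rate_def diameter_ge_0 finite_imp_bounded)
qed

lemma jump_rate_quadratic_drift:
  assumes TG: "T_graph Segs Bd" and x: "x \<in> tvertices Segs Bd - Bd"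
  shows "(\<Sum>z\<in>nbrs Segs Bd x. jump_rate Segs Bd x z * (cmod z ^ 2 - cmod x ^ 2)) = 1"
proof -
  obtain p q where N: "nbrs Segs Bd x = {p, q}" and "x \<in> open_segment p q"
    using nbrs_interior_vertex[OF TG x] by blast
  then have "p \<noteq> q"
    by auto
  have "jump_rate Segs Bd x z = 1 / (dist z x * dist p q)" if "z \<in> {p, q}" for z
    using x that by (simp add: jump_rate_def N diameter_doubleton dist_norm)
  then show ?thesis
    using open_segment_quadratic_drift[OF \<open>x \<in> open_segment p q\<close>] \<open>p \<noteq> q\<close> by (simp add: N)
qed

text \<open>Killing the walk outside A only removes nonnegative terms from the generator.\<close>

lemma gen_apply_generator_le:
  assumes V: "finite (tvertices Segs Bd)" and A: "finite A" "x \<in> A"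
    and h: "\<And>z. z \<in> nbrs Segs Bd x \<Longrightarrow> 0 \<le> h z"
  shows "gen_apply A (generator Segs Bd) h x \<le> (\<Sum>z\<in>nbrs Segs Bd x. jump_rate Segs Bd x z * (h z - h x))"
proof -
  let ?N = "nbrs Segs Bd x" and ?j = "jump_rate Segs Bd x"
  have "finite ?N" "x \<notin> ?N"
    using V by (auto simp: nbrs_def intro: rev_finite_subset)
  have "gen_apply A (generator Segs Bd) h x
      = generator Segs Bd x x * h x + (\<Sum>z\<in>A - {x}. generator Segs Bd x z * h z)"
    using A by (simp add: gen_apply_def sum.remove)
  also have "(\<Sum>z\<in>A - {x}. generator Segs Bd x z * h z) = (\<Sum>z\<in>A - {x}. ?j z * h z)"
    by (intro sum.cong) (auto simp: generator_def)
  also have "(\<Sum>z\<in>A - {x}. ?j z * h z) = (\<Sum>z\<in>(A - {x}) \<inter> ?N. ?j z * h z)"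
    using A by (intro sum.mono_neutral_right) (auto simp: jump_rate_def)
  also have "\<dots> \<le> (\<Sum>z\<in>?N. ?j z * h z)"
    using \<open>finite ?N\<close> h jump_rate_nonneg[OF V] by (intro sum_mono2) auto
  also have "generator Segs Bd x x * h x + (\<Sum>z\<in>?N. ?j z * h z) = (\<Sum>z\<in>?N. ?j z * (h z - h x))"
    by (simp add: generator_def sum_distrib_right right_diff_distrib sum_subtractf)
  finally show ?thesis
    by simp
qed

lemma sub_Q_matrix_generator:
  assumes "finite (tvertices Segs Bd)" "finite A"
  shows "sub_Q_matrix A (generator Segs Bd)"
  unfolding sub_Q_matrix_def
proof (intro conjI ballI impI)
  show "0 \<le> generator Segs Bd x y" if "x \<noteq> y" for x y
    using that jump_rate_nonneg[OF assms(1)] by (simp add: generator_def)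
  show "gen_apply A (generator Segs Bd) (\<lambda>_. 1) x \<le> 0" if "x \<in> A" for x
    using gen_apply_generator_le[OF assms that, of "\<lambda>_. 1"] by simp
qed

section \<open>Exit time from a ball\<close>

lemma exit_tail_eq_kexp_apply:
  "exit_tail Segs Bd r t x = kexp_apply (alive_set Segs Bd r) (generator Segs Bd) t (\<lambda>_. 1) x"
  by (simp add: exit_tail_def kexp_apply_def kexp_def)

lemma generator_drift_alive_set:
  assumes TG: "T_graph Segs Bd" and diam: "\<forall>S\<in>Segs. diameter S \<le> L" and "L \<le> r"
    and y: "y \<in> alive_set Segs Bd r"
  shows "gen_apply (alive_set Segs Bd r) (generator Segs Bd) (\<lambda>z. 4 * r\<^sup>2 - cmod z ^ 2) y \<le> -1"
proof -
  let ?g = "\<lambda>z. 4 * r\<^sup>2 - cmod z ^ 2"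
  have y': "y \<in> tvertices Segs Bd - Bd" "cmod y < r"
    using y by (auto simp: alive_set_def)
  have "0 \<le> ?g z" if "z \<in> nbrs Segs Bd y" for z
  proof -
    have "cmod z \<le> cmod y + dist z y"
      by (metis dist_norm norm_triangle_sub add.commute)
    also have "\<dots> \<le> 2 * r"
      using dist_nbrs_le[OF TG y'(1) diam that] y'(2) \<open>L \<le> r\<close> by simp
    finally have "cmod z ^ 2 \<le> (2 * r) ^ 2"
      by (intro power_mono) auto
    then show ?thesis
      by (simp add: power_mult_distrib)
  qed
  then have "gen_apply (alive_set Segs Bd r) (generator Segs Bd) ?g y
      \<le> (\<Sum>z\<in>nbrs Segs Bd y. jump_rate Segs Bd y z * (?g z - ?g y))"
    using y by (intro gen_apply_generator_le finite_tvertices[OF TG])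
      (auto simp: alive_set_def intro: finite_subset[OF _ finite_tvertices[OF TG]])
  also have "\<dots> = - (\<Sum>z\<in>nbrs Segs Bd y. jump_rate Segs Bd y z * (cmod z ^ 2 - cmod y ^ 2))"
    by (simp add: sum_negf[symmetric] algebra_simps)
  finally show ?thesis
    by (simp add: jump_rate_quadratic_drift[OF TG y'(1)])
qed

theorem lemma2:
  fixes Segs :: "complex set set" and Bd :: "complex set"
    and L r :: real and x0 :: complex and n :: nat
  assumes "T_graph Segs Bd"
    and "\<forall>S\<in>Segs. diameter S \<le> L"
    and "r \<ge> L"
    and "x0 \<in> tvertices Segs Bd"
    and "x0 \<in> ball 0 r"
    and "n \<ge> 1"
  shows "exit_tail Segs Bd r (18 * real n * r\<^sup>2) x0 \<le> 1 / 2 ^ n"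
proof -
  let ?A = "alive_set Segs Bd r"
  have "0 < r"
    using assms(5) le_less_trans[OF norm_ge_zero] by simp
  have fin: "finite (tvertices Segs Bd)" "finite ?A"
    using finite_tvertices[OF assms(1)] by (auto simp: alive_set_def)
  have "cmod y ^ 2 \<le> 4 * r\<^sup>2" if "y \<in> ?A" for y
  proof -
    have "cmod y ^ 2 \<le> r\<^sup>2"
      using that by (intro power_mono) (auto simp: alive_set_def)
    then show ?thesis
      using zero_le_power2[of r] by linarith
  qed
  then have g_bounds: "0 \<le> 4 * r\<^sup>2 - cmod y ^ 2" "4 * r\<^sup>2 - cmod y ^ 2 \<le> 4 * r\<^sup>2" if "y \<in> ?A" for y
    using that by auto
  have "kexp_apply ?A (generator Segs Bd) (real n * (18 * r\<^sup>2)) (\<lambda>_. 1) x0 \<le> 1 / 2 ^ n"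
    using \<open>0 < r\<close>
    by (intro survival_geometric_decay[OF fin(2) sub_Q_matrix_generator[OF fin] g_bounds
          generator_drift_alive_set[OF assms(1,2,3)]]) auto
  then show ?thesis
    by (simp add: exit_tail_eq_kexp_apply mult_ac)
qed

end
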